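(* Let $\mathbf F\in\mathcal F_d$, $C\in\mathcal C^{OS}(\mathbf F)$ and let $U$ be a random vector with cdf $S_{\mathbf F}(C)$, with order statistics $U^{OS}=(U_{(1)},\dots,U_{(d)})$. Then the multidiagonal $(\delta_{(1)},\dots,\delta_{(d)})$ of $S_{\mathbf F}(C)$ does not depend on $C$ and is given, for $1\le i\le d$, by $$\delta_{(i)}=\mathbf F_i\circ G^{-1},\qquad \delta_{(i)}^{-1}=G\circ\mathbf F_i^{-1}.$$ Furthermore, $C$ is the unique copula of $U^{OS}$.
   Context: $\mathcal F_d$: $d$-tuples $\mathbf F=(\mathbf F_1,\dots,\mathbf F_d)$ of continuous cdf's on $\mathbb R$ with $\mathbf F_{i-1}\ge\mathbf F_i$. For a bounded nondecreasing right-continuous $J$ on $\mathbb R$, $J^{-1}(t)=\inf\{s\in\mathbb R:J(s)\ge t\}$ (with $\inf\emptyset=+\infty$, $\inf\mathbb R=-\infty$). $\mathcal L^{OS}_d(\mathbf F)$: cdf's of random vectors $X$ with $X_1\le\dots\le X_d$ a.s. and $X_i\sim\mathbf F_i$. A copula is a cdf on $\mathbb R^d$ with uniform-on-$[0,1]$ marginals; $C_F(y)=F(F_1^{-1}(y_1),\dots,F_d^{-1}(y_d))$; $\mathcal C^{OS}(\mathbf F)=\{C_F:F\in\mathcal L^{OS}_d(\mathbf F)\}$. $G=\frac1d\sum_{i=1}^d\mathbf F_i$. $S_{\mathbf F}(C)$ is the copula of $X_\Pi=(X_{\Pi(1)},\dots,X_{\Pi(d)})$ where $X$ has marginals $\mathbf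 F$ and copula $C$ and $\Pi$ is an independent uniform random permutation. The multidiagonal of a copula $C'$ is the vector of cdf's of the order statistics of a random vector with cdf $C'$. *)

theory Defs
  imports "HOL-Probability.Probability" "HOL-Combinatorics.Permutations"
begin

text \<open>Indices are 0-based: coordinate i < d corresponds to the paper's index i+1.
  Vectors in R^d are functions nat => real, only coordinates below d matter.\<close>

definition is_cdf1 :: "(real \<Rightarrow> real) \<Rightarrow> bool" where
  "is_cdf1 J \<longleftrightarrow> mono J \<and> (J \<longlongrightarrow> 0) at_bot \<and> (J \<longlongrightarrow> 1) at_top
     \<and> (\<forall>x. continuous (at_right x) J)"

text \<open>Generalised inverse J^{-1}(t) = inf {s in R. J s >= t}, in the extended reals
  (inf of empty set = +infinity, inf of R = -infinity).\<close>
definition ginv :: "(real \<Rightarrow> real) \<Rightarrow> real \<Rightarrow> ereal" where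
  "ginv J t = Inf {ereal s | s. t \<le> J s}"

definition ecdf :: "(real \<Rightarrow> real) \<Rightarrow> ereal \<Rightarrow> real" where
  "ecdf J x = (if x = \<infinity> then 1 else if x = -\<infinity> then 0 else J (real_of_ereal x))"

definition in_Fd :: "nat \<Rightarrow> (nat \<Rightarrow> real \<Rightarrow> real) \<Rightarrow> bool" where
  "in_Fd d F \<longleftrightarrow> (\<forall>i<d. is_cdf1 (F i) \<and> continuous_on UNIV (F i))
     \<and> (\<forall>i. Suc i < d \<longrightarrow> (\<forall>t. F (Suc i) t \<le> F i t))"

definition Gmix :: "nat \<Rightarrow> (nat \<Rightarrow> real \<Rightarrow> real) \<Rightarrow> real \<Rightarrow> real" where
  "Gmix d F t = (\<Sum>i<d. F i t) / real d"

definition rand_vec :: "'a measure \<Rightarrow> nat \<Rightarrow> ('a \<Rightarrow> nat \<Rightarrow> real) \<Rightarrow> bool" where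
  "rand_vec M d X \<longleftrightarrow> (\<forall>i<d. (\<lambda>\<omega>. X \<omega> i) \<in> borel_measurable M)"

definition vcdf :: "'a measure \<Rightarrow> nat \<Rightarrow> ('a \<Rightarrow> nat \<Rightarrow> real) \<Rightarrow> (nat \<Rightarrow> ereal) \<Rightarrow> real" where
  "vcdf M d X x = measure M {\<omega> \<in> space M. \<forall>i<d. ereal (X \<omega> i) \<le> x i}"

definition has_cdf :: "'a measure \<Rightarrow> nat \<Rightarrow> ('a \<Rightarrow> nat \<Rightarrow> real) \<Rightarrow> ((nat \<Rightarrow> real) \<Rightarrow> real) \<Rightarrow> bool" where
  "has_cdf M d X H \<longleftrightarrow> (\<forall>x. H x = measure M {\<omega> \<in> space M. \<forall>i<d. X \<omega> i \<le> x i})"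

definition marg :: "'a measure \<Rightarrow> ('a \<Rightarrow> nat \<Rightarrow> real) \<Rightarrow> nat \<Rightarrow> real \<Rightarrow> real" where
  "marg M X i t = measure M {\<omega> \<in> space M. X \<omega> i \<le> t}"

definition is_dcdf :: "nat \<Rightarrow> ((nat \<Rightarrow> real) \<Rightarrow> real) \<Rightarrow> bool" where
  "is_dcdf d H \<longleftrightarrow> (\<exists>N. prob_space N \<and> sets N = sets (PiM {..<d} (\<lambda>_. borel))
      \<and> (\<forall>x. H x = measure N {y \<in> space N. \<forall>i<d. y i \<le> x i}))"

definition is_copula :: "nat \<Rightarrow> ((nat \<Rightarrow> real) \<Rightarrow> real) \<Rightarrow> bool" where
  "is_copula d C \<longleftrightarrow> (\<exists>N. prob_space N \<and> sets N = sets (PiM {..<d} (\<lambda>_. borel))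
      \<and> (\<forall>x. C x = measure N {y \<in> space N. \<forall>i<d. y i \<le> x i})
      \<and> (\<forall>i<d. \<forall>t. measure N {y \<in> space N. y i \<le> t} = min 1 (max 0 t)))"

definition copula_of :: "'a measure \<Rightarrow> nat \<Rightarrow> ('a \<Rightarrow> nat \<Rightarrow> real) \<Rightarrow> ((nat \<Rightarrow> real) \<Rightarrow> real) \<Rightarrow> bool" where
  "copula_of M d X C \<longleftrightarrow> is_copula d C
     \<and> (\<forall>y. C y = vcdf M d X (\<lambda>i. ginv (marg M X i) (y i)))"

definition in_COS :: "nat \<Rightarrow> (nat \<Rightarrow> real \<Rightarrow> real) \<Rightarrow> ((nat \<Rightarrow> real) \<Rightarrow> real) \<Rightarrow> bool" where
  "in_COS d F C \<longleftrightarrow> (\<exists>(M :: (nat \<Rightarrow> real) measure) X. prob_space M \<and> rand_vec M d X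
      \<and> (AE \<omega> in M. \<forall>i. Suc i < d \<longrightarrow> X \<omega> i \<le> X \<omega> (Suc i))
      \<and> (\<forall>i<d. marg M X i = F i)
      \<and> copula_of M d X C)"

definition ordstat :: "nat \<Rightarrow> (nat \<Rightarrow> real) \<Rightarrow> nat \<Rightarrow> real" where
  "ordstat d x i = sort (map x [0..<d]) ! i"

end

theory Submission
  imports Defs
begin

text \<open>
  Let \<open>Y = X \<circ> Perm\<close>. Averaging over the uniform permutation, which is independent of \<open>X\<close>,
  shows that every \<open>Y\<^sub>j\<close> has distribution function \<open>G\<close>; hence the vector \<open>G \<circ> Y\<close> of
  probability integral transforms has joint distribution function \<open>S\<close>, i.e. \<open>U\<close> has the law
  of \<open>G \<circ> Y\<close>. Order statistics are invariant under permutations and \<open>X\<close> is almost surely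
  ordered, so the order statistics of \<open>U\<close> have the law of \<open>G \<circ> X\<close>.

  Since \<open>G\<close> is the average of the \<open>F\<^sub>i\<close>, each \<open>F\<^sub>i\<close> is constant on the level sets of \<open>G\<close>,
  i.e. \<open>F\<^sub>i = \<delta>\<^sub>i \<circ> G\<close> with \<open>\<delta>\<^sub>i = F\<^sub>i \<circ> G\<inverse>\<close>. This makes \<open>\<delta>\<^sub>i\<close> the distribution function
  of \<open>G(X\<^sub>i)\<close>, with inverse \<open>G \<circ> F\<^sub>i\<inverse>\<close> on \<open>(0,1)\<close>, and it makes the events
  \<open>X\<^sub>i \<le> F\<^sub>i\<inverse>(y\<^sub>i)\<close>, which define \<open>C\<close>, almost surely equal to the events
  \<open>G(X\<^sub>i) \<le> \<delta>\<^sub>i\<inverse>(y\<^sub>i)\<close>, which define the copula of the order statistics. Uniqueness is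
  immediate, since \<open>copula_of\<close> prescribes the copula pointwise by the formula for \<open>C\<^sub>F\<close>.
\<close>

section \<open>Continuous distribution functions and their generalised inverse\<close>

definition continuous_cdf :: "(real \<Rightarrow> real) \<Rightarrow> bool" where
  "continuous_cdf H \<longleftrightarrow> mono H \<and> (H \<longlongrightarrow> 0) at_bot \<and> (H \<longlongrightarrow> 1) at_top \<and> continuous_on UNIV H"

lemma continuous_cdfD:
  assumes "continuous_cdf H"
  shows continuous_cdf_mono: "mono H"
    and continuous_cdf_at_bot: "(H \<longlongrightarrow> 0) at_bot"
    and continuous_cdf_at_top: "(H \<longlongrightarrow> 1) at_top"
    and continuous_cdf_continuous: "continuous_on UNIV H"
  using assms by (auto simp: continuous_cdf_def)

lemma continuous_cdf_measurable [measurable]: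
  "continuous_cdf H \<Longrightarrow> H \<in> borel_measurable borel"
  by (intro borel_measurable_continuous_onI continuous_cdf_continuous)

lemma continuous_cdf_bounded:
  assumes "continuous_cdf H"
  shows continuous_cdf_nonneg: "0 \<le> H x" and continuous_cdf_le_1: "H x \<le> 1"
proof -
  have "\<forall>\<^sub>F y in at_bot. H y \<le> H x"
    using eventually_le_at_bot[of x] by eventually_elim (use assms in \<open>auto dest: continuous_cdf_mono monoD\<close>)
  from tendsto_upperbound[OF continuous_cdf_at_bot[OF assms] this] show "0 \<le> H x" by simp
  have "\<forall>\<^sub>F y in at_top. H x \<le> H y"
    using eventually_ge_at_top[of x] by eventually_elim (use assms in \<open>auto dest: continuous_cdf_mono monoD\<close>)
  from tendsto_lowerbound[OF continuous_cdf_at_top[OF assms] this] show "H x \<le> 1" by simp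
qed

lemma continuous_cdf_average:
  assumes "finite I" "I \<noteq> {}" "\<And>i. i \<in> I \<Longrightarrow> continuous_cdf (H i)"
  shows "continuous_cdf (\<lambda>t. (\<Sum>i\<in>I. H i t) / real (card I))"
proof -
  have card: "0 < real (card I)" using assms(1,2) by (simp add: card_gt_0_iff)
  have "mono (\<lambda>t. (\<Sum>i\<in>I. H i t) / real (card I))"
  proof (rule monoI)
    fix x y :: real assume "x \<le> y"
    then have "(\<Sum>i\<in>I. H i x) \<le> (\<Sum>i\<in>I. H i y)"
      using assms(3) by (intro sum_mono) (blast dest: continuous_cdf_mono monoD)
    then show "(\<Sum>i\<in>I. H i x) / real (card I) \<le> (\<Sum>i\<in>I. H i y) / real (card I)"
      using card by (simp add: divide_right_mono)
  qed
  moreover have "((\<lambda>t. (\<Sum>i\<in>I. H i t) / real (card I)) \<longlongrightarrow> (\<Sum>i\<in>I. 0) / real (card I)) at_bot"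
    using assms(3) card by (intro tendsto_divide tendsto_sum continuous_cdf_at_bot) auto
  moreover have "((\<lambda>t. (\<Sum>i\<in>I. H i t) / real (card I)) \<longlongrightarrow> (\<Sum>i\<in>I. 1) / real (card I)) at_top"
    using assms(3) card by (intro tendsto_divide tendsto_sum continuous_cdf_at_top) auto
  moreover have "continuous_on UNIV (\<lambda>t. (\<Sum>i\<in>I. H i t) / real (card I))"
    using assms(3) card by (intro continuous_intros continuous_cdf_continuous) auto
  ultimately show ?thesis
    using card by (simp add: continuous_cdf_def)
qed

lemma ginv_le_iff:
  assumes "mono H" and "continuous (at_right s) H"
  shows "ginv H t \<le> ereal s \<longleftrightarrow> t \<le> H s"
proof
  assume "t \<le> H s"
  then show "ginv H t \<le> ereal s"
    unfolding ginv_def by (intro Inf_lower) auto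
next
  assume le: "ginv H t \<le> ereal s"
  show "t \<le> H s"
  proof (rule ccontr)
    assume "\<not> t \<le> H s"
    then have "\<forall>\<^sub>F y in at_right s. H y < t"
      using assms(2) by (intro order_tendstoD) (auto simp: continuous_within)
    then obtain b where "s < b" and b: "\<And>y. s < y \<Longrightarrow> y < b \<Longrightarrow> H y < t"
      by (auto simp: eventually_at_right_field)
    have "ereal b \<le> ginv H t"
      unfolding ginv_def
    proof (rule Inf_greatest, clarify)
      fix r assume r: "t \<le> H r"
      have "H r < t" if "r < b"
      proof (cases "r \<le> s")
        case True
        with assms(1) have "H r \<le> H s" by (rule monoD)
        with \<open>\<not> t \<le> H s\<close> show ?thesis by simp
      qed (use b that in auto)
      with r show "ereal b \<le> ereal r" by force
    qed
    with le have "ereal b \<le> ereal s" by (rule order_trans[rotated])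
    with \<open>s < b\<close> show False by simp
  qed
qed

lemma le_ginv_iff: "ereal x \<le> ginv H t \<longleftrightarrow> (\<forall>s<x. H s < t)"
proof -
  have "ereal x \<le> ginv H t \<longleftrightarrow> (\<forall>s. t \<le> H s \<longrightarrow> x \<le> s)"
    unfolding ginv_def le_Inf_iff by auto
  also have "\<dots> \<longleftrightarrow> (\<forall>s<x. H s < t)"
    by (meson not_le)
  finally show ?thesis .
qed

lemma le_ginv_imp_cdf_le:
  assumes "continuous_on UNIV H" "ereal x \<le> ginv H t"
  shows "H x \<le> t"
proof -
  have "(H \<longlongrightarrow> H x) (at_left x)"
    using assms(1) by (simp add: continuous_on_eq_continuous_at filterlim_at_split isCont_def)
  moreover have "\<forall>\<^sub>F s in at_left x. H s \<le> t"
    using assms(2) by (auto simp: le_ginv_iff eventually_at_left_field intro!: exI[of _ "x - 1"] less_imp_le)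
  ultimately show ?thesis
    by (rule tendsto_upperbound) simp
qed

lemma ginv_eq_MInf: "(\<And>s. t \<le> H s) \<Longrightarrow> ginv H t = -\<infinity>"
  unfolding ginv_def by (rule ereal_bot) (auto intro: Inf_lower2)

lemma ginv_eq_PInf:
  assumes "\<And>s. H s < t"
  shows "ginv H t = \<infinity>"
proof -
  have "{ereal s |s. t \<le> H s} = {}"
    using assms by (auto dest: leD)
  then show ?thesis
    by (simp add: ginv_def top_ereal_def)
qed

lemma ginv_mono: "t \<le> t' \<Longrightarrow> ginv H t \<le> ginv H t'"
  unfolding ginv_def by (intro Inf_superset_mono) auto

lemma ecdf_less_of_less_ginv:
  assumes "a < ginv H t" "0 < t"
  shows "ecdf H a < t"
proof (cases a)
  case (real r)
  with assms(1) have "\<not> ginv H t \<le> ereal r" by simp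
  then have "\<not> t \<le> H r"
    unfolding ginv_def by (auto intro: Inf_lower)
  with real show ?thesis by (simp add: ecdf_def)
qed (use assms in \<open>auto simp: ecdf_def\<close>)

context
  fixes H :: "real \<Rightarrow> real"
  assumes H: "continuous_cdf H"
begin

lemma continuous_cdf_ginv_le_iff: "ginv H t \<le> ereal s \<longleftrightarrow> t \<le> H s"
  using H by (intro ginv_le_iff continuous_cdf_mono)
    (auto simp: continuous_on_eq_continuous_at continuous_at_imp_continuous_within dest: continuous_cdf_continuous)

lemma continuous_cdf_le_ginv_imp_le: "ereal x \<le> ginv H t \<Longrightarrow> H x \<le> t"
  using H by (intro le_ginv_imp_cdf_le continuous_cdf_continuous)

lemma continuous_cdf_ginv_cdf_le: "ginv H (H x) \<le> ereal x"
  by (simp add: continuous_cdf_ginv_le_iff)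

lemma continuous_cdf_ginv_nonpos: "t \<le> 0 \<Longrightarrow> ginv H t = -\<infinity>"
  using continuous_cdf_nonneg[OF H] by (intro ginv_eq_MInf) (auto intro: order_trans)

lemma continuous_cdf_ginv_gt_1: "1 < t \<Longrightarrow> ginv H t = \<infinity>"
  using continuous_cdf_le_1[OF H] by (intro ginv_eq_PInf) (auto intro: le_less_trans)

lemma continuous_cdf_ginv_pos:
  assumes "0 < t"
  shows "ginv H t \<noteq> -\<infinity>"
proof -
  have "\<forall>\<^sub>F s in at_bot. H s < t" using continuous_cdf_at_bot[OF H] assms by (rule order_tendstoD)
  then obtain s where "H s < t" by (auto simp: eventually_at_bot_linorder)
  then have "\<not> ginv H t \<le> ereal s" by (simp add: continuous_cdf_ginv_le_iff)
  then show ?thesis by auto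
qed

lemma continuous_cdf_ginv_less_1:
  assumes "t < 1"
  shows "ginv H t \<noteq> \<infinity>"
proof -
  have "\<forall>\<^sub>F s in at_top. t < H s" using continuous_cdf_at_top[OF H] assms by (rule order_tendstoD)
  then obtain s where "t < H s" by (auto simp: eventually_at_top_linorder)
  then have "ginv H t \<le> ereal s" by (simp add: continuous_cdf_ginv_le_iff)
  then show ?thesis by auto
qed

lemma continuous_cdf_cdf_ginv:
  assumes "t \<le> 1" "ginv H t = ereal q"
  shows "H q = t"
proof (rule antisym)
  show "H q \<le> t" using assms(2) by (intro continuous_cdf_le_ginv_imp_le) simp
  show "t \<le> H q" using assms(2) by (simp flip: continuous_cdf_ginv_le_iff)
qed

lemma continuous_cdf_ginv_interior:
  assumes "0 < t" "t < 1"
  obtains q where "ginv H t = ereal q" "H q = t"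
  using continuous_cdf_ginv_pos[OF assms(1)] continuous_cdf_ginv_less_1[OF assms(2)]
    continuous_cdf_cdf_ginv assms(2) by (cases "ginv H t") auto

lemma ecdf_nonneg: "0 \<le> ecdf H a" and ecdf_le_1: "ecdf H a \<le> 1"
  using continuous_cdf_bounded[OF H] by (auto simp: ecdf_def)

lemma ecdf_mono: "a \<le> b \<Longrightarrow> ecdf H a \<le> ecdf H b"
  using continuous_cdf_bounded[OF H] continuous_cdf_mono[OF H]
  by (cases a; cases b) (auto simp: ecdf_def dest: monoD)

lemma ecdf_ginv: "ecdf H (ginv H t) = min 1 (max 0 t)"
proof (cases "ginv H t")
  case (real q)
  moreover from real have "0 < t"
    using continuous_cdf_ginv_nonpos by (cases "0 < t") auto
  moreover from real have "t \<le> 1"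
    using continuous_cdf_ginv_gt_1 by (cases "t \<le> 1") auto
  ultimately show ?thesis
    using continuous_cdf_cdf_ginv by (simp add: ecdf_def)
next
  case PInf
  then show ?thesis
    using continuous_cdf_ginv_pos continuous_cdf_ginv_less_1
    by (cases "0 < t"; cases "t < 1") (auto simp: ecdf_def)
next
  case MInf
  then show ?thesis
    using continuous_cdf_ginv_pos by (cases "0 < t") (auto simp: ecdf_def)
qed

end

section \<open>Distribution functions constant on the level sets of another\<close>

context
  fixes G H :: "real \<Rightarrow> real"
  assumes G: "continuous_cdf G" and H: "continuous_cdf H"
    and levels: "\<And>x y. G x = G y \<Longrightarrow> H x = H y"
begin

lemma ecdf_ginv_level: "ecdf H (ginv G (G x)) = H x"
proof (cases "ginv G (G x)")
  case (real q)
  then have "G q = G x"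
    using continuous_cdf_cdf_ginv[OF G] continuous_cdf_le_1[OF G] by simp
  with real show ?thesis by (simp add: ecdf_def levels[of q x])
next
  case MInf
  then have "G x \<le> G s" for s
    using continuous_cdf_ginv_le_iff[OF G, of "G x" s] by simp
  then have "G s = G x" if "s \<le> x" for s
    using continuous_cdf_mono[OF G] that by (auto intro: antisym dest: monoD)
  then have "\<forall>\<^sub>F s in at_bot. H s = H x"
    unfolding eventually_at_bot_linorder by (blast intro: levels)
  then have "(H \<longlongrightarrow> H x) at_bot"
    by (rule tendsto_eventually)
  then have "H x = 0"
    using continuous_cdf_at_bot[OF H] by (rule tendsto_unique[OF trivial_limit_at_bot_linorder])
  with MInf show ?thesis by (simp add: ecdf_def)
next
  case PInf
  with continuous_cdf_ginv_cdf_le[OF G, of x] show ?thesis by simp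
qed

lemma ginv_ecdf_ginv:
  assumes "0 < t" "t < 1"
  shows "ginv (\<lambda>s. ecdf H (ginv G s)) t = ereal (ecdf G (ginv H t))"
proof -
  obtain q where q: "ginv H t = ereal q" "H q = t"
    using continuous_cdf_ginv_interior[OF H assms] .
  have "t \<le> ecdf H (ginv G (G q))"
    using q(2) by (simp add: ecdf_ginv_level)
  then have "ginv (\<lambda>s. ecdf H (ginv G s)) t \<le> ereal (G q)"
    unfolding ginv_def by (intro Inf_lower) auto
  moreover have "ecdf H (ginv G s) < t" if "s < G q" for s
  proof (rule ecdf_less_of_less_ginv[OF _ assms(1)])
    have "\<not> ereal q \<le> ginv G s"
      using that continuous_cdf_le_ginv_imp_le[OF G] by force
    then show "ginv G s < ginv H t" by (simp add: q)
  qed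
  then have "ereal (G q) \<le> ginv (\<lambda>s. ecdf H (ginv G s)) t"
    by (simp add: le_ginv_iff)
  ultimately show ?thesis
    using q by (simp add: ecdf_def)
qed

end

section \<open>Real random variables with a continuous distribution function\<close>

lemma (in prob_space) AE_iff_of_imp_of_prob_le:
  assumes "{\<omega>\<in>space M. P \<omega>} \<in> events" "{\<omega>\<in>space M. Q \<omega>} \<in> events"
    and "\<And>\<omega>. \<omega> \<in> space M \<Longrightarrow> P \<omega> \<Longrightarrow> Q \<omega>"
    and "prob {\<omega>\<in>space M. Q \<omega>} \<le> prob {\<omega>\<in>space M. P \<omega>}"
  shows "AE \<omega> in M. P \<omega> \<longleftrightarrow> Q \<omega>"
proof -
  let ?D = "{\<omega>\<in>space M. Q \<omega>} - {\<omega>\<in>space M. P \<omega>}"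
  have "prob ?D = prob {\<omega>\<in>space M. Q \<omega>} - prob {\<omega>\<in>space M. P \<omega>}"
    using assms(1-3) by (intro finite_measure_Diff) auto
  with assms(4) have "prob ?D = 0"
    using measure_nonneg[of M ?D] by linarith
  then have "?D \<in> null_sets M"
    using assms(1,2) by (simp add: emeasure_eq_measure null_sets_def)
  then have "AE \<omega> in M. \<omega> \<notin> ?D"
    by (rule AE_not_in)
  with AE_space show ?thesis
    by eventually_elim (use assms(3) in blast)
qed

lemma (in prob_space) AE_le_ginv_1:
  assumes [measurable]: "W \<in> borel_measurable M"
    and cdf: "\<And>s. prob {\<omega>\<in>space M. W \<omega> \<le> s} = \<delta> s"
  shows "AE \<omega> in M. ereal (W \<omega>) \<le> ginv \<delta> 1"
proof -
  have "AE \<omega> in M. W \<omega> \<le> r" if "ginv \<delta> 1 < ereal r" for r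
  proof -
    from that obtain s where "s < r" "1 \<le> \<delta> s"
      unfolding ginv_def by (auto simp: Inf_less_iff)
    then have "prob {\<omega>\<in>space M. W \<omega> \<le> s} = 1"
      using cdf[of s] prob_le_1[of "{\<omega>\<in>space M. W \<omega> \<le> s}"] by simp
    then have "AE \<omega> in M. W \<omega> \<le> s"
      by (subst prob_Collect_eq_1[symmetric]) auto
    then show ?thesis
      by eventually_elim (use \<open>s < r\<close> in auto)
  qed
  then have "AE \<omega> in M. \<forall>r::rat. ginv \<delta> 1 < ereal (real_of_rat r) \<longrightarrow> W \<omega> \<le> real_of_rat r"
    by (subst AE_all_countable) auto
  then show ?thesis
  proof eventually_elim
    case (elim \<omega>)
    show ?case
    proof (rule ccontr)
      assume "\<not> ereal (W \<omega>) \<le> ginv \<delta> 1"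
      then obtain r :: rat where "ginv \<delta> 1 < real_of_rat r" "real_of_rat r < ereal (W \<omega>)"
        using ereal_dense3 by (meson not_le)
      with elim show False by auto
    qed
  qed
qed

locale real_rv_with_continuous_cdf = prob_space M for M :: "'a measure" +
  fixes Z :: "'a \<Rightarrow> real" and H :: "real \<Rightarrow> real"
  assumes measurable_Z [measurable]: "Z \<in> borel_measurable M"
    and prob_le_eq_cdf: "\<And>s. prob {\<omega>\<in>space M. Z \<omega> \<le> s} = H s"
    and continuous_cdf: "continuous_cdf H"
begin

lemma measurable_H [measurable]: "H \<in> borel_measurable borel"
  using continuous_cdf by measurable

lemma prob_le_ereal: "prob {\<omega>\<in>space M. ereal (Z \<omega>) \<le> a} = ecdf H a"
  by (cases a) (auto simp: ecdf_def prob_le_eq_cdf prob_space)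

lemma prob_le_ginv: "prob {\<omega>\<in>space M. ereal (Z \<omega>) \<le> ginv H t} = min 1 (max 0 t)"
  unfolding prob_le_ereal by (rule ecdf_ginv[OF continuous_cdf])

lemma prob_cdf_le:
  assumes "0 \<le> c"
  shows "prob {\<omega>\<in>space M. H (Z \<omega>) \<le> c} \<le> c"
proof (rule dense_ge)
  fix w assume "c < w"
  have "{\<omega>\<in>space M. H (Z \<omega>) \<le> c} \<subseteq> {\<omega>\<in>space M. ereal (Z \<omega>) \<le> ginv H w}"
  proof clarify
    fix \<omega> assume "H (Z \<omega>) \<le> c"
    have "H s < w" if "s < Z \<omega>" for s
      using continuous_cdf_mono[OF continuous_cdf] that \<open>H (Z \<omega>) \<le> c\<close> \<open>c < w\<close>
      by (meson le_less_trans less_imp_le monoD)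
    then show "ereal (Z \<omega>) \<le> ginv H w" by (simp add: le_ginv_iff)
  qed
  then have "prob {\<omega>\<in>space M. H (Z \<omega>) \<le> c} \<le> min 1 (max 0 w)"
    unfolding prob_le_ginv[symmetric] by (intro finite_measure_mono) auto
  with assms \<open>c < w\<close> show "prob {\<omega>\<in>space M. H (Z \<omega>) \<le> c} \<le> w" by linarith
qed

lemma AE_le_ginv_iff: "AE \<omega> in M. ereal (Z \<omega>) \<le> ginv H t \<longleftrightarrow> H (Z \<omega>) \<le> t"
proof (rule AE_iff_of_imp_of_prob_le)
  show "H (Z \<omega>) \<le> t" if "ereal (Z \<omega>) \<le> ginv H t" for \<omega>
    using continuous_cdf_le_ginv_imp_le[OF continuous_cdf that] .
  show "prob {\<omega>\<in>space M. H (Z \<omega>) \<le> t} \<le> prob {\<omega>\<in>space M. ereal (Z \<omega>) \<le> ginv H t}"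
  proof (cases "0 \<le> t")
    case True
    then show ?thesis
      using prob_cdf_le[of t] prob_le_1[of "{\<omega>\<in>space M. H (Z \<omega>) \<le> t}"]
      by (simp add: prob_le_ginv)
  next
    case False
    then have "t < H x" for x
      using continuous_cdf_nonneg[OF continuous_cdf, of x] by linarith
    then have "{\<omega>\<in>space M. H (Z \<omega>) \<le> t} = {}"
      by (auto dest: leD)
    then show ?thesis
      using measure_nonneg[of M "{\<omega>\<in>space M. ereal (Z \<omega>) \<le> ginv H t}"] by (metis measure_empty)
  qed
qed auto

lemma AE_le_iff_cdf_le: "AE \<omega> in M. Z \<omega> \<le> x \<longleftrightarrow> H (Z \<omega>) \<le> H x"
proof (rule AE_iff_of_imp_of_prob_le)
  show "H (Z \<omega>) \<le> H x" if "Z \<omega> \<le> x" for \<omega>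
    using continuous_cdf_mono[OF continuous_cdf] that by (rule monoD)
  show "prob {\<omega>\<in>space M. H (Z \<omega>) \<le> H x} \<le> prob {\<omega>\<in>space M. Z \<omega> \<le> x}"
    using prob_cdf_le[OF continuous_cdf_nonneg[OF continuous_cdf]] by (simp add: prob_le_eq_cdf)
qed auto

context
  fixes G :: "real \<Rightarrow> real"
  assumes G: "continuous_cdf G" and levels: "\<And>x y. G x = G y \<Longrightarrow> H x = H y"
begin

lemma measurable_G [measurable]: "G \<in> borel_measurable borel"
  using G by measurable

lemma prob_transform_le: "prob {\<omega>\<in>space M. G (Z \<omega>) \<le> t} = ecdf H (ginv G t)"
proof (rule antisym)
  have "{\<omega>\<in>space M. G (Z \<omega>) \<le> t} \<subseteq> {\<omega>\<in>space M. H (Z \<omega>) \<le> ecdf H (ginv G t)}"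
  proof clarify
    fix \<omega> assume "G (Z \<omega>) \<le> t"
    then have "ecdf H (ginv G (G (Z \<omega>))) \<le> ecdf H (ginv G t)"
      by (intro ecdf_mono[OF continuous_cdf] ginv_mono)
    then show "H (Z \<omega>) \<le> ecdf H (ginv G t)"
      by (simp add: ecdf_ginv_level[OF G continuous_cdf levels])
  qed
  then have "prob {\<omega>\<in>space M. G (Z \<omega>) \<le> t} \<le> prob {\<omega>\<in>space M. H (Z \<omega>) \<le> ecdf H (ginv G t)}"
    by (intro finite_measure_mono) auto
  also have "\<dots> \<le> ecdf H (ginv G t)"
    by (intro prob_cdf_le ecdf_nonneg[OF continuous_cdf])
  finally show "prob {\<omega>\<in>space M. G (Z \<omega>) \<le> t} \<le> ecdf H (ginv G t)" .
  have "{\<omega>\<in>space M. ereal (Z \<omega>) \<le> ginv G t} \<subseteq> {\<omega>\<in>space M. G (Z \<omega>) \<le> t}"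
    using continuous_cdf_le_ginv_imp_le[OF G] by blast
  then show "ecdf H (ginv G t) \<le> prob {\<omega>\<in>space M. G (Z \<omega>) \<le> t}"
    unfolding prob_le_ereal[symmetric] by (intro finite_measure_mono) auto
qed

lemma AE_le_iff_transform_le: "AE \<omega> in M. Z \<omega> \<le> x \<longleftrightarrow> G (Z \<omega>) \<le> G x"
proof -
  have GH: "H (Z \<omega>) \<le> H x" if "G (Z \<omega>) \<le> G x" for \<omega>
    using ecdf_mono[OF continuous_cdf ginv_mono[where H=G, OF that]]
    by (simp add: ecdf_ginv_level[OF G continuous_cdf levels])
  have ZG: "G (Z \<omega>) \<le> G x" if "Z \<omega> \<le> x" for \<omega>
    using continuous_cdf_mono[OF G] that by (rule monoD)
  from AE_le_iff_cdf_le[of x] show ?thesis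
    by eventually_elim (use GH ZG in blast)
qed

lemma AE_le_ginv_iff_transform:
  "AE \<omega> in M. ereal (Z \<omega>) \<le> ginv H y \<longleftrightarrow> ereal (G (Z \<omega>)) \<le> ginv (\<lambda>s. ecdf H (ginv G s)) y"
proof -
  let ?\<delta> = "\<lambda>s. ecdf H (ginv G s)"
  consider "y \<le> 0" | "0 < y" "y < 1" | "y = 1" | "1 < y" by linarith
  then show ?thesis
  proof cases
    case 1
    then have "ginv H y = -\<infinity>" "ginv ?\<delta> y = -\<infinity>"
      using continuous_cdf_ginv_nonpos[OF continuous_cdf] ecdf_nonneg[OF continuous_cdf]
      by (auto intro!: ginv_eq_MInf intro: order_trans)
    then show ?thesis by simp
  next
    case 2
    obtain q where q: "ginv H y = ereal q" "H q = y"
      using continuous_cdf_ginv_interior[OF continuous_cdf 2] .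
    have \<delta>q: "ginv ?\<delta> y = ereal (G q)"
      using ginv_ecdf_ginv[OF G continuous_cdf levels 2] q by (simp add: ecdf_def)
    from AE_le_iff_transform_le[of q] show ?thesis
      by eventually_elim (simp add: q \<delta>q)
  next
    case 3
    have "AE \<omega> in M. ereal (Z \<omega>) \<le> ginv H 1"
      using prob_le_ginv[of 1] by (subst prob_Collect_eq_1[symmetric]) auto
    moreover have "AE \<omega> in M. ereal (G (Z \<omega>)) \<le> ginv ?\<delta> 1"
      by (rule AE_le_ginv_1) (auto simp: prob_transform_le)
    ultimately show ?thesis
      by eventually_elim (simp add: 3)
  next
    case 4
    then have "ginv H y = \<infinity>" "ginv ?\<delta> y = \<infinity>"
      using continuous_cdf_ginv_gt_1[OF continuous_cdf] ecdf_le_1[OF continuous_cdf]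
      by (auto intro!: ginv_eq_PInf intro: le_less_trans)
    then show ?thesis by simp
  qed
qed

end

end

section \<open>Random vectors\<close>

lemma sets_Collect_all_less:
  fixes d :: nat
  assumes "\<And>i. i < d \<Longrightarrow> {x\<in>space M. P i x} \<in> sets M"
  shows "{x\<in>space M. \<forall>i<d. P i x} \<in> sets M"
proof -
  have "{x\<in>space M. \<forall>i<d. P i x} = {x\<in>space M. \<forall>i\<in>{..<d}. P i x}" by auto
  also have "\<dots> \<in> sets M" using assms by (intro sets.sets_Collect_finite_All) auto
  finally show ?thesis .
qed

lemma measure_all_less_cong_AE:
  fixes d :: nat
  assumes "\<And>i. i < d \<Longrightarrow> {\<omega>\<in>space M. P i \<omega>} \<in> sets M"
    and "\<And>i. i < d \<Longrightarrow> {\<omega>\<in>space M. Q i \<omega>} \<in> sets M"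
    and "\<And>i. i < d \<Longrightarrow> AE \<omega> in M. P i \<omega> \<longleftrightarrow> Q i \<omega>"
  shows "measure M {\<omega>\<in>space M. \<forall>i<d. P i \<omega>} = measure M {\<omega>\<in>space M. \<forall>i<d. Q i \<omega>}"
proof (rule measure_eq_AE)
  have "AE \<omega> in M. \<forall>i\<in>{..<d}. P i \<omega> \<longleftrightarrow> Q i \<omega>"
    using assms(3) by (subst AE_finite_all) auto
  then show "AE \<omega> in M. \<omega> \<in> {\<omega>\<in>space M. \<forall>i<d. P i \<omega>} \<longleftrightarrow> \<omega> \<in> {\<omega>\<in>space M. \<forall>i<d. Q i \<omega>}"
    by eventually_elim auto
qed (use assms(1,2) in \<open>auto intro: sets_Collect_all_less\<close>)

lemma measurable_restrict_rand_vec: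
  "rand_vec M d W \<Longrightarrow> (\<lambda>\<omega>. restrict (W \<omega>) {..<d}) \<in> measurable M (PiM {..<d} (\<lambda>_. borel))"
  by (auto intro!: measurable_restrict simp: rand_vec_def)

lemma sets_Collect_restrict_mem:
  assumes "rand_vec M d W" "A \<in> sets (PiM {..<d} (\<lambda>_. borel))"
  shows "{\<omega>\<in>space M. restrict (W \<omega>) {..<d} \<in> A} \<in> sets M"
  using measurable_sets[OF measurable_restrict_rand_vec[OF assms(1)] assms(2)]
  by (simp add: vimage_def Int_def conj_commute)

lemma marg_eq_vcdf:
  assumes "i < d"
  shows "marg M W i t = vcdf M d W (\<lambda>j. if j = i then ereal t else \<infinity>)"
  using assms unfolding marg_def vcdf_def by (auto intro!: arg_cong[where f="measure M"])

lemma copula_of_unique: "copula_of M d W C \<Longrightarrow> copula_of M d W C' \<Longrightarrow> C = C'"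
  by (auto simp: copula_of_def)

definition lower_orthant :: "nat set \<Rightarrow> (nat \<Rightarrow> real) \<Rightarrow> (nat \<Rightarrow> real) set" where
  "lower_orthant I a = {f \<in> PiE I (\<lambda>_. UNIV). \<forall>i\<in>I. f i \<le> a i}"

lemma sets_PiM_eq_sigma_lower_orthants:
  assumes "finite I"
  shows "sets (PiM I (\<lambda>_. borel :: real measure)) = sigma_sets (PiE I (\<lambda>_. UNIV)) (range (lower_orthant I))"
proof -
  let ?P = "{{f \<in> PiE I (\<lambda>_. UNIV). \<forall>i\<in>j. f i \<in> A i} |A j. j \<in> {I} \<and> A \<in> Pi j (\<lambda>_. range (atMost :: real \<Rightarrow> real set))}"
  have "?P = range (lower_orthant I)"
  proof (intro set_eqI iffI)
    fix X assume "X \<in> ?P"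
    then obtain A where "\<forall>i\<in>I. \<exists>a. A i = {..a}" and X: "X = {f \<in> PiE I (\<lambda>_. UNIV). \<forall>i\<in>I. f i \<in> A i}"
      by blast
    then obtain a where "\<forall>i\<in>I. A i = {..a i}" by metis
    with X have "X = lower_orthant I a" by (auto simp: lower_orthant_def)
    then show "X \<in> range (lower_orthant I)" by blast
  next
    fix X assume "X \<in> range (lower_orthant I)"
    then obtain a where "X = {f \<in> PiE I (\<lambda>_. UNIV). \<forall>i\<in>I. f i \<in> {..a i}}"
      by (auto simp: lower_orthant_def)
    then show "X \<in> ?P"
      by (intro CollectI exI[of _ "\<lambda>i. {..a i}"] exI[of _ I]) auto
  qed
  moreover have "sets (PiM I (\<lambda>_. borel :: real measure)) = sets (sigma (PiE I (\<lambda>_. UNIV)) ?P)"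
    unfolding borel_eq_atMost
  proof (rule sets_PiM_sigma)
    show "\<exists>S\<subseteq>range atMost. countable S \<and> (UNIV::real set) = \<Union> S" for i :: nat
      by (intro exI[of _ "range (\<lambda>n::nat. {..real n})"]) (auto intro: real_arch_simple)
  qed (use assms in auto)
  moreover have "range (lower_orthant I) \<subseteq> Pow (PiE I (\<lambda>_. UNIV))"
    by (auto simp: lower_orthant_def)
  ultimately show ?thesis
    by simp
qed

lemma Int_stable_lower_orthants: "Int_stable (range (lower_orthant I))"
proof (rule Int_stableI, clarify)
  fix a b
  have "lower_orthant I a \<inter> lower_orthant I b = lower_orthant I (\<lambda>i. min (a i) (b i))"
    by (auto simp: lower_orthant_def)
  then show "lower_orthant I a \<inter> lower_orthant I b \<in> range (lower_orthant I)" by blast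
qed

lemma UN_lower_orthants:
  assumes "finite I"
  shows "(\<Union>n::nat. lower_orthant I (\<lambda>_. real n)) = PiE I (\<lambda>_. UNIV)"
proof (intro antisym subsetI)
  fix f :: "nat \<Rightarrow> real" assume f: "f \<in> PiE I (\<lambda>_. UNIV)"
  obtain n :: nat where n: "Max (insert 0 (f ` I)) \<le> real n"
    using real_arch_simple by blast
  have "f i \<le> real n" if "i \<in> I" for i
  proof -
    have "f i \<le> Max (insert 0 (f ` I))" using that assms by (intro Max_ge) auto
    with n show ?thesis by linarith
  qed
  with f show "f \<in> (\<Union>n. lower_orthant I (\<lambda>_. real n))"
    by (auto simp: lower_orthant_def)
qed (auto simp: lower_orthant_def)

lemma distr_restrict_eq_of_joint_cdf_eq:
  fixes W1 :: "'a \<Rightarrow> nat \<Rightarrow> real" and W2 :: "'b \<Rightarrow> nat \<Rightarrow> real"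
  assumes "prob_space M1" "prob_space M2" "rand_vec M1 d W1" "rand_vec M2 d W2"
    and joint_cdf: "\<And>x. measure M1 {\<omega>\<in>space M1. \<forall>i<d. W1 \<omega> i \<le> x i} = measure M2 {\<omega>\<in>space M2. \<forall>i<d. W2 \<omega> i \<le> x i}"
  shows "distr M1 (PiM {..<d} (\<lambda>_. borel)) (\<lambda>\<omega>. restrict (W1 \<omega>) {..<d})
       = distr M2 (PiM {..<d} (\<lambda>_. borel)) (\<lambda>\<omega>. restrict (W2 \<omega>) {..<d})"
    (is "?D1 = ?D2")
proof -
  let ?I = "{..<d}" and ?\<Omega> = "PiE {..<d} (\<lambda>_. UNIV :: real set)"
  interpret M1: prob_space M1 by fact
  interpret M2: prob_space M2 by fact
  note meas1 = measurable_restrict_rand_vec[OF assms(3)]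
  note meas2 = measurable_restrict_rand_vec[OF assms(4)]
  interpret D1: prob_space ?D1 using meas1 by (rule M1.prob_space_distr)
  show ?thesis
  proof (rule measure_eqI_generator_eq[where E="range (lower_orthant ?I)" and \<Omega>="?\<Omega>"
        and A="\<lambda>n. lower_orthant ?I (\<lambda>_. real n)"])
    show "Int_stable (range (lower_orthant ?I))"
      by (rule Int_stable_lower_orthants)
    show "range (lower_orthant ?I) \<subseteq> Pow ?\<Omega>"
      by (auto simp: lower_orthant_def)
    show "sets ?D1 = sigma_sets ?\<Omega> (range (lower_orthant ?I))" "sets ?D2 = sigma_sets ?\<Omega> (range (lower_orthant ?I))"
      by (simp_all add: sets_PiM_eq_sigma_lower_orthants)
    show "range (\<lambda>n. lower_orthant ?I (\<lambda>_. real n)) \<subseteq> range (lower_orthant ?I)"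
      by blast
    show "emeasure ?D1 (lower_orthant ?I (\<lambda>_. real n)) \<noteq> \<infinity>" for n
      by simp
    show "(\<Union>n. lower_orthant ?I (\<lambda>_. real n)) = ?\<Omega>"
      by (rule UN_lower_orthants) simp
    fix X assume "X \<in> range (lower_orthant ?I)"
    then obtain a where X: "X = lower_orthant ?I a" by blast
    have "X \<in> sets (PiM ?I (\<lambda>_. borel))"
      unfolding sets_PiM_eq_sigma_lower_orthants[OF finite_lessThan] X by blast
    moreover have "(\<lambda>\<omega>. restrict (W1 \<omega>) ?I) -` X \<inter> space M1 = {\<omega>\<in>space M1. \<forall>i<d. W1 \<omega> i \<le> a i}"
      and "(\<lambda>\<omega>. restrict (W2 \<omega>) ?I) -` X \<inter> space M2 = {\<omega>\<in>space M2. \<forall>i<d. W2 \<omega> i \<le> a i}"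
      by (auto simp: X lower_orthant_def)
    ultimately show "emeasure ?D1 X = emeasure ?D2 X"
      using joint_cdf[of a] meas1 meas2
      by (simp add: emeasure_distr M1.emeasure_eq_measure M2.emeasure_eq_measure)
  qed
qed

lemma prob_restrict_eq_of_joint_cdf_eq:
  fixes W1 :: "'a \<Rightarrow> nat \<Rightarrow> real" and W2 :: "'b \<Rightarrow> nat \<Rightarrow> real"
  assumes "prob_space M1" "prob_space M2" "rand_vec M1 d W1" "rand_vec M2 d W2"
    and "\<And>x. measure M1 {\<omega>\<in>space M1. \<forall>i<d. W1 \<omega> i \<le> x i} = measure M2 {\<omega>\<in>space M2. \<forall>i<d. W2 \<omega> i \<le> x i}"
    and A: "A \<in> sets (PiM {..<d} (\<lambda>_. borel))"
  shows "measure M1 {\<omega>\<in>space M1. restrict (W1 \<omega>) {..<d} \<in> A} = measure M2 {\<omega>\<in>space M2. restrict (W2 \<omega>) {..<d} \<in> A}"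
  using measurable_restrict_rand_vec[OF assms(3), THEN measure_distr, OF A]
    measurable_restrict_rand_vec[OF assms(4), THEN measure_distr, OF A]
    distr_restrict_eq_of_joint_cdf_eq[OF assms(1-5)]
  by (simp add: vimage_def Int_def conj_commute)

lemma real_rv_with_continuous_cdf_coordinate:
  assumes "prob_space M" "rand_vec M d Y" "i < d" "marg M Y i = H" "continuous_cdf H"
  shows "real_rv_with_continuous_cdf M (\<lambda>\<omega>. Y \<omega> i) H"
  using assms
  by (auto simp: real_rv_with_continuous_cdf_def real_rv_with_continuous_cdf_axioms_def rand_vec_def marg_def)

lemma copula_of_eq_prob:
  assumes "copula_of M d Y S" "\<forall>i<d. marg M Y i = H i"
  shows "S y = measure M {\<omega>\<in>space M. \<forall>i<d. ereal (Y \<omega> i) \<le> ginv (H i) (y i)}"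
  using assms unfolding copula_of_def vcdf_def by (auto intro!: arg_cong[where f="measure M"])

context
  fixes M :: "'a measure" and d :: nat and Y :: "'a \<Rightarrow> nat \<Rightarrow> real"
    and H :: "nat \<Rightarrow> real \<Rightarrow> real" and S :: "(nat \<Rightarrow> real) \<Rightarrow> real"
  assumes M: "prob_space M" and Y: "rand_vec M d Y"
    and marg_Y: "\<forall>i<d. marg M Y i = H i" and H: "\<forall>i<d. continuous_cdf (H i)"
    and S: "copula_of M d Y S"
begin

lemma copula_eq_prob_cdf_le: "S x = measure M {\<omega>\<in>space M. \<forall>i<d. H i (Y \<omega> i) \<le> x i}"
  unfolding copula_of_eq_prob[OF S marg_Y]
proof (rule measure_all_less_cong_AE)
  fix i assume "i < d"
  then interpret real_rv_with_continuous_cdf M "\<lambda>\<omega>. Y \<omega> i" "H i"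
    using M Y marg_Y H by (intro real_rv_with_continuous_cdf_coordinate) auto
  show "AE \<omega> in M. ereal (Y \<omega> i) \<le> ginv (H i) (x i) \<longleftrightarrow> H i (Y \<omega> i) \<le> x i"
    by (rule AE_le_ginv_iff)
  show "{\<omega>\<in>space M. ereal (Y \<omega> i) \<le> ginv (H i) (x i)} \<in> sets M"
    and "{\<omega>\<in>space M. H i (Y \<omega> i) \<le> x i} \<in> sets M"
    by measurable
qed

lemma prob_le_eq_copula_cdf: "measure M {\<omega>\<in>space M. \<forall>i<d. Y \<omega> i \<le> x i} = S (\<lambda>i. H i (x i))"
  unfolding copula_eq_prob_cdf_le
proof (rule measure_all_less_cong_AE)
  fix i assume "i < d"
  then interpret real_rv_with_continuous_cdf M "\<lambda>\<omega>. Y \<omega> i" "H i"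
    using M Y marg_Y H by (intro real_rv_with_continuous_cdf_coordinate) auto
  show "AE \<omega> in M. Y \<omega> i \<le> x i \<longleftrightarrow> H i (Y \<omega> i) \<le> H i (x i)"
    by (rule AE_le_iff_cdf_le)
  show "{\<omega>\<in>space M. Y \<omega> i \<le> x i} \<in> sets M" and "{\<omega>\<in>space M. H i (Y \<omega> i) \<le> H i (x i)} \<in> sets M"
    by measurable
qed

end

lemma sets_PiM_ordered:
  "{u\<in>space (PiM {..<d} (\<lambda>_. borel :: real measure)). \<forall>i. Suc i < d \<longrightarrow> u i \<le> u (Suc i)}
    \<in> sets (PiM {..<d} (\<lambda>_. borel))"
proof -
  let ?Pi = "PiM {..<d} (\<lambda>_. borel :: real measure)"
  have "{u\<in>space ?Pi. Suc i < d \<longrightarrow> u i \<le> u (Suc i)} \<in> sets ?Pi" for i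
  proof (cases "Suc i < d")
    case True
    then have [measurable]: "(\<lambda>u. u i) \<in> borel_measurable ?Pi" "(\<lambda>u. u (Suc i)) \<in> borel_measurable ?Pi"
      by (auto intro!: measurable_component_singleton)
    have "{u\<in>space ?Pi. u i \<le> u (Suc i)} \<in> sets ?Pi"
      by measurable
    with True show ?thesis by simp
  qed simp
  then have "{u\<in>space ?Pi. \<forall>i<d. Suc i < d \<longrightarrow> u i \<le> u (Suc i)} \<in> sets ?Pi"
    by (rule sets_Collect_all_less)
  also have "{u\<in>space ?Pi. \<forall>i<d. Suc i < d \<longrightarrow> u i \<le> u (Suc i)}
      = {u\<in>space ?Pi. \<forall>i. Suc i < d \<longrightarrow> u i \<le> u (Suc i)}"
    by auto
  finally show ?thesis .
qed

lemma AE_ordered_of_in_COS: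
  assumes F: "\<forall>i<d. continuous_cdf (F i)" and C: "in_COS d F C"
    and M: "prob_space M" and X: "rand_vec M d X"
    and marg_X: "\<forall>i<d. marg M X i = F i" and cop_X: "copula_of M d X C"
  shows "AE \<omega> in M. \<forall>i. Suc i < d \<longrightarrow> X \<omega> i \<le> X \<omega> (Suc i)"
proof -
  obtain M' :: "(nat \<Rightarrow> real) measure" and X' where M': "prob_space M'" and X': "rand_vec M' d X'"
    and ordered': "AE \<omega> in M'. \<forall>i. Suc i < d \<longrightarrow> X' \<omega> i \<le> X' \<omega> (Suc i)"
    and marg_X': "\<forall>i<d. marg M' X' i = F i" and cop_X': "copula_of M' d X' C"
    using C unfolding in_COS_def by blast
  interpret M: prob_space M by (rule M)
  interpret M': prob_space M' by (rule M')
  define Ord where "Ord = {u\<in>space (PiM {..<d} (\<lambda>_. borel :: real measure)). \<forall>i. Suc i < d \<longrightarrow> u i \<le> u (Suc i)}"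
  have Ord: "Ord \<in> sets (PiM {..<d} (\<lambda>_. borel))"
    unfolding Ord_def by (rule sets_PiM_ordered)
  have restrict_Ord: "restrict f {..<d} \<in> Ord \<longleftrightarrow> (\<forall>i. Suc i < d \<longrightarrow> f i \<le> f (Suc i))" for f
    by (auto simp: Ord_def space_PiM)
  txt \<open>By Sklar's formula both \<open>X\<close> and the ordered witness \<open>X'\<close> of \<open>C \<in> C\<^sup>O\<^sup>S(F)\<close> have
    joint distribution function \<open>C \<circ> F\<close>, hence the same law.\<close>
  have "M.prob {\<omega>\<in>space M. \<forall>i<d. X \<omega> i \<le> x i} = M'.prob {\<omega>\<in>space M'. \<forall>i<d. X' \<omega> i \<le> x i}" for x
    using prob_le_eq_copula_cdf[OF M X marg_X F cop_X, of x] prob_le_eq_copula_cdf[OF M' X' marg_X' F cop_X', of x]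
    by (rule trans[OF _ sym])
  then have "M.prob {\<omega>\<in>space M. restrict (X \<omega>) {..<d} \<in> Ord} = M'.prob {\<omega>\<in>space M'. restrict (X' \<omega>) {..<d} \<in> Ord}"
    by (rule prob_restrict_eq_of_joint_cdf_eq[OF M M' X X' _ Ord])
  also have "\<dots> = 1"
  proof -
    from ordered' have "AE \<omega> in M'. restrict (X' \<omega>) {..<d} \<in> Ord"
      by (simp add: restrict_Ord)
    then show ?thesis
      by (rule M'.prob_Collect_eq_1[THEN iffD2, OF sets_Collect_restrict_mem[OF X' Ord]])
  qed
  finally have "AE \<omega> in M. restrict (X \<omega>) {..<d} \<in> Ord"
    by (rule M.prob_Collect_eq_1[THEN iffD1, OF sets_Collect_restrict_mem[OF X Ord]])
  then show ?thesis
    by (simp add: restrict_Ord)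
qed

section \<open>Order statistics\<close>

lemma sorted_nth_le_iff_less_length_filter:
  assumes "sorted ys" "i < length ys"
  shows "ys ! i \<le> t \<longleftrightarrow> i < length (filter (\<lambda>y. y \<le> t) ys)"
  using assms
proof (induction ys arbitrary: i)
  case (Cons y ys)
  show ?case
  proof (cases "y \<le> t")
    case True
    with Cons show ?thesis by (cases i) auto
  next
    case False
    have gt: "t < z" if "z \<in> set (y # ys)" for z
      using Cons.prems(1) that False by auto
    then have "filter (\<lambda>y. y \<le> t) (y # ys) = []"
      by (intro filter_False) (auto dest: leD)
    moreover have "t < (y # ys) ! i"
      using Cons.prems(2) by (intro gt nth_mem)
    ultimately show ?thesis by simp
  qed
qed simp

lemma ordstat_le_iff:
  assumes "i < d"
  shows "ordstat d u i \<le> t \<longleftrightarrow> i < card {k. k < d \<and> u k \<le> t}"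
proof -
  have "ordstat d u i \<le> t \<longleftrightarrow> i < length (filter (\<lambda>y. y \<le> t) (sort (map u [0..<d])))"
    unfolding ordstat_def using assms by (intro sorted_nth_le_iff_less_length_filter) auto
  also have "length (filter (\<lambda>y. y \<le> t) (sort (map u [0..<d]))) = length (filter (\<lambda>y. y \<le> t) (map u [0..<d]))"
    by (metis mset_filter mset_sort size_mset)
  also have "\<dots> = card {k. k < d \<and> u k \<le> t}"
    by (simp add: length_filter_conv_card cong: conj_cong)
  finally show ?thesis .
qed

lemma borel_measurable_ordstat:
  assumes "i < d"
  shows "(\<lambda>u. ordstat d u i) \<in> borel_measurable (PiM {..<d} (\<lambda>_. borel))"
proof (rule borel_measurable_iff_le[THEN iffD2], intro allI)
  fix t
  let ?Pi = "PiM {..<d} (\<lambda>_. borel :: real measure)"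
  define count where "count u = (\<Sum>k<d. indicator {..t} (u k) :: real)" for u :: "nat \<Rightarrow> real"
  have "(\<lambda>u. indicator {..t} (u k) :: real) \<in> borel_measurable ?Pi" if "k \<in> {..<d}" for k
    by (intro measurable_compose[OF measurable_component_singleton[OF that]] borel_measurable_indicator) simp
  then have "count \<in> borel_measurable ?Pi"
    unfolding count_def by (rule borel_measurable_sum)
  have "count u = real (card {k. k < d \<and> u k \<le> t})" for u
  proof -
    have "{k. k < d \<and> u k \<le> t} = {..<d} \<inter> {k. u k \<le> t}" by auto
    then show ?thesis by (simp add: count_def indicator_def)
  qed
  then have "{u\<in>space ?Pi. ordstat d u i \<le> t} = count -` {real i<..} \<inter> space ?Pi"
    by (auto simp: ordstat_le_iff[OF assms])
  also have "\<dots> \<in> sets ?Pi"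
    using \<open>count \<in> borel_measurable ?Pi\<close> by (rule measurable_sets) simp
  finally show "{u\<in>space ?Pi. ordstat d u i \<le> t} \<in> sets ?Pi" .
qed

lemma sets_PiM_ordstat_le:
  "{u\<in>space (PiM {..<d} (\<lambda>_. borel)). \<forall>i<d. ereal (ordstat d u i) \<le> x i} \<in> sets (PiM {..<d} (\<lambda>_. borel))"
proof (rule sets_Collect_all_less)
  fix i assume "i < d"
  note borel_measurable_ordstat[OF this, measurable]
  show "{u\<in>space (PiM {..<d} (\<lambda>_. borel)). ereal (ordstat d u i) \<le> x i} \<in> sets (PiM {..<d} (\<lambda>_. borel))"
    by measurable
qed

lemma ordstat_restrict: "ordstat d (restrict u {..<d}) = ordstat d u"
proof -
  have "map (restrict u {..<d}) [0..<d] = map u [0..<d]"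
    by (rule map_cong) auto
  then show ?thesis unfolding ordstat_def by (simp only:)
qed

lemma ordstat_permute:
  assumes "p permutes {..<d}"
  shows "ordstat d (u \<circ> p) = ordstat d u"
proof -
  have "mset (map p [0..<d]) = mset [0..<d]"
    using assms by (simp add: atLeast0LessThan image_mset_mset_set permutes_inj_on permutes_image)
  then have "mset (map (u \<circ> p) [0..<d]) = mset (map u [0..<d])"
    by (metis map_map mset_map)
  then show ?thesis
    unfolding ordstat_def by (metis sorted_list_of_multiset_mset)
qed

lemma ordstat_sorted:
  assumes "\<forall>k. Suc k < d \<longrightarrow> u k \<le> u (Suc k)" "i < d"
  shows "ordstat d u i = u i"
proof -
  have "sorted (map u [0..<d])"
    using assms(1) by (simp add: sorted_iff_nth_Suc)
  with assms(2) show ?thesis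
    by (simp add: ordstat_def sorted_sort_id)
qed

section \<open>The average of the marginals\<close>

lemma in_Fd_continuous_cdf: "in_Fd d F \<Longrightarrow> i < d \<Longrightarrow> continuous_cdf (F i)"
  by (auto simp: in_Fd_def is_cdf1_def continuous_cdf_def)

lemma continuous_cdf_Gmix:
  assumes "in_Fd d F" "0 < d"
  shows "continuous_cdf (Gmix d F)"
  using continuous_cdf_average[of "{..<d}" F] assms
  by (simp add: Gmix_def[abs_def] in_Fd_continuous_cdf lessThan_empty_iff)

lemma Gmix_eq_imp_eq:
  assumes F: "in_Fd d F" and i: "i < d" and eq: "Gmix d F x = Gmix d F y"
  shows "F i x = F i y"
proof -
  have key: "F i x = F i y" if "x \<le> y" "Gmix d F x = Gmix d F y" for x y
  proof -
    have le: "F k x \<le> F k y" if "k < d" for k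
      using continuous_cdf_mono[OF in_Fd_continuous_cdf[OF F that]] \<open>x \<le> y\<close> by (rule monoD)
    have "(\<Sum>k<d. F k y - F k x) = 0"
      using that(2) i by (simp add: Gmix_def sum_subtractf)
    then have "\<forall>k\<in>{..<d}. F k y - F k x = 0"
      using sum_nonneg_eq_0_iff[of "{..<d}" "\<lambda>k. F k y - F k x"] le by simp
    with i show ?thesis by simp
  qed
  show ?thesis
  proof (cases "x \<le> y")
    case False
    then have "y \<le> x" by simp
    from key[OF this eq[symmetric]] show ?thesis ..
  qed (rule key[OF _ eq])
qed

lemma sum_permutations_apply:
  fixes f :: "nat \<Rightarrow> real"
  assumes "j < d"
  shows "(\<Sum>p\<in>{p. p permutes {..<d}}. f (p j)) = fact (d - 1) * (\<Sum>k<d. f k)"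
proof -
  let ?P = "{p. p permutes {..<d}}"
  have same: "(\<Sum>p\<in>?P. f (p k)) = (\<Sum>p\<in>?P. f (p j))" if "k < d" for k
  proof -
    have "Transposition.transpose j k permutes {..<d}"
      using assms that by (intro permutes_swap_id) auto
    from sum_permutations_compose_right[OF this, of "\<lambda>p. f (p j)"] show ?thesis
      by simp
  qed
  have "real d * (\<Sum>p\<in>?P. f (p j)) = (\<Sum>k<d. \<Sum>p\<in>?P. f (p j))"
    by simp
  also have "\<dots> = (\<Sum>k<d. \<Sum>p\<in>?P. f (p k))"
    by (rule sum.cong[OF refl], rule same[symmetric]) simp
  also have "\<dots> = (\<Sum>p\<in>?P. \<Sum>k<d. f (p k))"
    by (rule sum.swap)
  also have "\<dots> = (\<Sum>p\<in>?P. \<Sum>k<d. f k)"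
  proof (rule sum.cong[OF refl])
    fix p assume "p \<in> ?P"
    then show "(\<Sum>k<d. f (p k)) = (\<Sum>k<d. f k)"
      using sum.permute[of p "{..<d}" f] by (simp add: comp_def)
  qed
  also have "\<dots> = fact d * (\<Sum>k<d. f k)"
    by (simp add: card_permutations)
  also have "fact d = real d * fact (d - 1)"
    using assms by (simp add: fact_reduce)
  finally show ?thesis
    using assms by simp
qed

section \<open>Symmetrization by an independent uniform random permutation\<close>

locale random_symmetrization = prob_space M for M :: "'a measure" +
  fixes d :: nat and F :: "nat \<Rightarrow> real \<Rightarrow> real" and C S :: "(nat \<Rightarrow> real) \<Rightarrow> real"
    and X :: "'a \<Rightarrow> nat \<Rightarrow> real" and Perm :: "'a \<Rightarrow> nat \<Rightarrow> nat"
  assumes F: "in_Fd d F"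
    and C: "in_COS d F C"
    and X: "rand_vec M d X"
    and Xmarg: "\<forall>i<d. marg M X i = F i"
    and Xcop: "copula_of M d X C"
    and Perm_perm: "\<forall>\<omega>\<in>space M. Perm \<omega> permutes {..<d}"
    and Perm_meas: "Perm \<in> measurable M (count_space UNIV)"
    and Perm_unif: "\<forall>p. p permutes {..<d} \<longrightarrow> prob {\<omega> \<in> space M. Perm \<omega> = p} = 1 / fact d"
    and indep: "\<forall>A \<in> sets (PiM {..<d} (\<lambda>_. borel)). \<forall>p.
                  prob {\<omega> \<in> space M. restrict (X \<omega>) {..<d} \<in> A \<and> Perm \<omega> = p}
                  = prob {\<omega> \<in> space M. restrict (X \<omega>) {..<d} \<in> A} * prob {\<omega> \<in> space M. Perm \<omega> = p}"
    and S: "copula_of M d (\<lambda>\<omega> i. X \<omega> (Perm \<omega> i)) S"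
begin

abbreviation G :: "real \<Rightarrow> real" where
  "G \<equiv> Gmix d F"

abbreviation Y :: "'a \<Rightarrow> nat \<Rightarrow> real" where
  "Y \<omega> i \<equiv> X \<omega> (Perm \<omega> i)"

lemma continuous_cdf_G: "0 < d \<Longrightarrow> continuous_cdf G"
  using F by (rule continuous_cdf_Gmix)

lemma measurable_G [measurable]: "G \<in> borel_measurable borel"
  using continuous_cdf_G by (cases "d = 0") (auto simp: Gmix_def[abs_def])

lemma continuous_cdf_F: "i < d \<Longrightarrow> continuous_cdf (F i)"
  using F by (rule in_Fd_continuous_cdf)

lemma measurable_X: "i < d \<Longrightarrow> (\<lambda>\<omega>. X \<omega> i) \<in> borel_measurable M"
  using X by (simp add: rand_vec_def)

lemma rv_X: "i < d \<Longrightarrow> real_rv_with_continuous_cdf M (\<lambda>\<omega>. X \<omega> i) (F i)"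
  using prob_space_axioms X Xmarg continuous_cdf_F by (intro real_rv_with_continuous_cdf_coordinate) auto

lemma events_Perm_eq: "{\<omega>\<in>space M. Perm \<omega> = p} \<in> events"
  using measurable_sets[OF Perm_meas, of "{p}"] by (simp add: vimage_def Int_def conj_commute)

lemma measurable_Perm_apply:
  assumes "j < d"
  shows "(\<lambda>\<omega>. Perm \<omega> j) \<in> measurable M (count_space {..<d})"
proof (subst measurable_count_space_eq2)
  show "(\<lambda>\<omega>. Perm \<omega> j) \<in> space M \<rightarrow> {..<d} \<and> (\<forall>k\<in>{..<d}. (\<lambda>\<omega>. Perm \<omega> j) -` {k} \<inter> space M \<in> events)"
  proof
    show "(\<lambda>\<omega>. Perm \<omega> j) \<in> space M \<rightarrow> {..<d}"
      using Perm_perm assms by (auto dest: permutes_in_image)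
    show "\<forall>k\<in>{..<d}. (\<lambda>\<omega>. Perm \<omega> j) -` {k} \<inter> space M \<in> events"
      using measurable_sets[OF Perm_meas, of "{p. p j = k}" for k] by (simp add: vimage_def)
  qed
qed simp

lemma measurable_Y: "j < d \<Longrightarrow> (\<lambda>\<omega>. Y \<omega> j) \<in> borel_measurable M"
  by (rule measurable_compose_countable'[OF measurable_X measurable_Perm_apply]) auto

lemma prob_X_le_Perm_eq:
  assumes "k < d"
  shows "prob {\<omega>\<in>space M. X \<omega> k \<le> t \<and> Perm \<omega> = p} = F k t * prob {\<omega>\<in>space M. Perm \<omega> = p}"
proof -
  let ?A = "{u\<in>space (PiM {..<d} (\<lambda>_. borel)). u k \<le> t}"
  have "(\<lambda>u. u k) \<in> borel_measurable (PiM {..<d} (\<lambda>_. borel))"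
    using assms by (intro measurable_component_singleton) simp
  then have "?A \<in> sets (PiM {..<d} (\<lambda>_. borel))"
    by measurable
  with indep have eq: "prob {\<omega>\<in>space M. restrict (X \<omega>) {..<d} \<in> ?A \<and> Perm \<omega> = p}
      = prob {\<omega>\<in>space M. restrict (X \<omega>) {..<d} \<in> ?A} * prob {\<omega>\<in>space M. Perm \<omega> = p}"
    by blast
  have mem_A: "restrict (X \<omega>) {..<d} \<in> ?A \<longleftrightarrow> X \<omega> k \<le> t" for \<omega>
    using assms by (simp add: space_PiM)
  from eq show ?thesis
    unfolding mem_A real_rv_with_continuous_cdf.prob_le_eq_cdf[OF rv_X[OF assms]] .
qed

lemma marg_Y: "j < d \<Longrightarrow> marg M Y j = G"
proof
  fix t assume j: "j < d"
  let ?P = "{p. p permutes {..<d}}"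
  let ?E = "\<lambda>p. {\<omega>\<in>space M. X \<omega> (p j) \<le> t \<and> Perm \<omega> = p}"
  have pj: "p j < d" if "p \<in> ?P" for p
    using that j by (auto dest: permutes_in_image)
  have "{\<omega>\<in>space M. Y \<omega> j \<le> t} = (\<Union>p\<in>?P. ?E p)"
    using Perm_perm by auto
  then have "marg M Y j t = prob (\<Union>p\<in>?P. ?E p)"
    by (simp add: marg_def)
  also have "\<dots> = (\<Sum>p\<in>?P. prob (?E p))"
  proof (rule finite_measure_finite_Union)
    show "finite ?P" by (rule finite_permutations) simp
    show "?E ` ?P \<subseteq> events"
      using pj measurable_X events_Perm_eq by (auto intro!: sets.Int[of "{\<omega>\<in>space M. X \<omega> _ \<le> t}", simplified])
    show "disjoint_family_on ?E ?P"
      by (auto simp: disjoint_family_on_def)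
  qed
  also have "\<dots> = (\<Sum>p\<in>?P. F (p j) t) / fact d"
    using pj Perm_unif by (simp add: prob_X_le_Perm_eq sum_divide_distrib)
  also have "\<dots> = fact (d - 1) * (\<Sum>k<d. F k t) / fact d"
    by (simp add: sum_permutations_apply[OF j, of "\<lambda>k. F k t"])
  also have "\<dots> = G t"
    using j by (simp add: Gmix_def fact_reduce)
  finally show "marg M Y j t = G t" .
qed

lemma copula_S_eq_prob: "S x = prob {\<omega>\<in>space M. \<forall>i<d. G (Y \<omega> i) \<le> x i}"
  using prob_space_axioms _ _ _ S
proof (rule copula_eq_prob_cdf_le)
  show "rand_vec M d Y"
    using measurable_Y by (simp add: rand_vec_def)
qed (auto simp: marg_Y continuous_cdf_G)

lemma AE_X_ordered: "AE \<omega> in M. \<forall>i. Suc i < d \<longrightarrow> X \<omega> i \<le> X \<omega> (Suc i)"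
  using continuous_cdf_F C prob_space_axioms X Xmarg Xcop by (intro AE_ordered_of_in_COS) auto

lemma AE_ordstat_G_Y: "AE \<omega> in M. \<forall>i<d. ordstat d (\<lambda>k. G (Y \<omega> k)) i = G (X \<omega> i)"
  using AE_X_ordered AE_space
proof eventually_elim
  case (elim \<omega>)
  have "ordstat d (\<lambda>k. G (Y \<omega> k)) = ordstat d ((\<lambda>k. G (X \<omega> k)) \<circ> Perm \<omega>)"
    by (simp add: comp_def)
  also have "\<dots> = ordstat d (\<lambda>k. G (X \<omega> k))"
    using Perm_perm elim by (simp add: ordstat_permute)
  finally show ?case
    using elim continuous_cdf_mono[OF continuous_cdf_G]
    by (auto intro!: ordstat_sorted dest: monoD)
qed

lemma vcdf_ordstat:
  fixes N :: "'b measure" and U :: "'b \<Rightarrow> nat \<Rightarrow> real"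
  assumes N: "prob_space N" and U: "rand_vec N d U" and cdf_U: "has_cdf N d U S"
  shows "vcdf N d (\<lambda>\<omega>. ordstat d (U \<omega>)) = vcdf M d (\<lambda>\<omega> i. G (X \<omega> i))"
proof
  fix x :: "nat \<Rightarrow> ereal"
  let ?Pi = "PiM {..<d} (\<lambda>_. borel :: real measure)"
  define A where "A = {u\<in>space ?Pi. \<forall>i<d. ereal (ordstat d u i) \<le> x i}"
  have A: "A \<in> sets ?Pi"
    unfolding A_def by (rule sets_PiM_ordstat_le)
  have restrict_A: "restrict f {..<d} \<in> A \<longleftrightarrow> (\<forall>i<d. ereal (ordstat d f i) \<le> x i)" for f
    by (simp add: A_def space_PiM ordstat_restrict)
  have V: "rand_vec M d (\<lambda>\<omega> i. G (Y \<omega> i))"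
    using measurable_Y by (auto simp: rand_vec_def)
  have "vcdf N d (\<lambda>\<omega>. ordstat d (U \<omega>)) x = measure N {\<omega>\<in>space N. restrict (U \<omega>) {..<d} \<in> A}"
    by (simp add: vcdf_def restrict_A)
  also have "\<dots> = prob {\<omega>\<in>space M. restrict (\<lambda>i. G (Y \<omega> i)) {..<d} \<in> A}"
    using N prob_space_axioms U V _ A
    by (rule prob_restrict_eq_of_joint_cdf_eq) (use cdf_U in \<open>simp add: has_cdf_def copula_S_eq_prob\<close>)
  also have "\<dots> = prob {\<omega>\<in>space M. \<forall>i<d. ereal (G (X \<omega> i)) \<le> x i}"
  proof (rule measure_eq_AE)
    show "AE \<omega> in M. \<omega> \<in> {\<omega>\<in>space M. restrict (\<lambda>i. G (Y \<omega> i)) {..<d} \<in> A}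
        \<longleftrightarrow> \<omega> \<in> {\<omega>\<in>space M. \<forall>i<d. ereal (G (X \<omega> i)) \<le> x i}"
      using AE_ordstat_G_Y by eventually_elim (simp add: restrict_A)
    show "{\<omega>\<in>space M. restrict (\<lambda>i. G (Y \<omega> i)) {..<d} \<in> A} \<in> events"
      using V A by (rule sets_Collect_restrict_mem)
    show "{\<omega>\<in>space M. \<forall>i<d. ereal (G (X \<omega> i)) \<le> x i} \<in> events"
    proof (rule sets_Collect_all_less)
      fix i assume "i < d"
      note measurable_X[OF this, measurable]
      show "{\<omega>\<in>space M. ereal (G (X \<omega> i)) \<le> x i} \<in> events"
        by measurable
    qed
  qed
  also have "\<dots> = vcdf M d (\<lambda>\<omega> i. G (X \<omega> i)) x"
    by (simp add: vcdf_def)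
  finally show "vcdf N d (\<lambda>\<omega>. ordstat d (U \<omega>)) x = vcdf M d (\<lambda>\<omega> i. G (X \<omega> i)) x" .
qed

lemma marg_G_X: "i < d \<Longrightarrow> marg M (\<lambda>\<omega> i. G (X \<omega> i)) i t = ecdf (F i) (ginv G t)"
  using real_rv_with_continuous_cdf.prob_transform_le[OF rv_X continuous_cdf_G Gmix_eq_imp_eq[OF F]]
  by (simp add: marg_def)

lemma copula_C_eq_vcdf_G_X:
  "C y = vcdf M d (\<lambda>\<omega> i. G (X \<omega> i)) (\<lambda>i. ginv (\<lambda>s. ecdf (F i) (ginv G s)) (y i))"
  unfolding copula_of_eq_prob[OF Xcop Xmarg] vcdf_def
proof (rule measure_all_less_cong_AE)
  fix i assume "i < d"
  then interpret real_rv_with_continuous_cdf M "\<lambda>\<omega>. X \<omega> i" "F i"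
    by (rule rv_X)
  show "AE \<omega> in M. ereal (X \<omega> i) \<le> ginv (F i) (y i) \<longleftrightarrow> ereal (G (X \<omega> i)) \<le> ginv (\<lambda>s. ecdf (F i) (ginv G s)) (y i)"
    using \<open>i < d\<close> by (intro AE_le_ginv_iff_transform continuous_cdf_G Gmix_eq_imp_eq[OF F]) auto
  show "{\<omega>\<in>space M. ereal (X \<omega> i) \<le> ginv (F i) (y i)} \<in> events"
    by measurable
  show "{\<omega>\<in>space M. ereal (G (X \<omega> i)) \<le> ginv (\<lambda>s. ecdf (F i) (ginv G s)) (y i)} \<in> events"
    by measurable
qed

lemma marg_ordstat:
  fixes N :: "'b measure"
  assumes "prob_space N" "rand_vec N d U" "has_cdf N d U S" "i < d"
  shows "marg N (\<lambda>\<omega>. ordstat d (U \<omega>)) i t = ecdf (F i) (ginv G t)"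
  using assms by (simp add: marg_eq_vcdf vcdf_ordstat marg_G_X[symmetric])

lemma ginv_marg_ordstat:
  fixes N :: "'b measure"
  assumes "prob_space N" "rand_vec N d U" "has_cdf N d U S" "i < d" "0 < t" "t < 1"
  shows "ginv (marg N (\<lambda>\<omega>. ordstat d (U \<omega>)) i) t = ereal (ecdf G (ginv (F i) t))"
proof -
  have "marg N (\<lambda>\<omega>. ordstat d (U \<omega>)) i = (\<lambda>t. ecdf (F i) (ginv G t))"
    using marg_ordstat[OF assms(1-4)] by (rule ext)
  moreover have "0 < d" using assms(4) by simp
  ultimately show ?thesis
    using assms(4-6) by (simp add: ginv_ecdf_ginv[OF continuous_cdf_G continuous_cdf_F Gmix_eq_imp_eq[OF F]])
qed

lemma copula_of_ordstat:
  fixes N :: "'b measure"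
  assumes "prob_space N" "rand_vec N d U" "has_cdf N d U S"
  shows "copula_of N d (\<lambda>\<omega>. ordstat d (U \<omega>)) C"
proof -
  have "\<forall>i<d. marg N (\<lambda>\<omega>. ordstat d (U \<omega>)) i = (\<lambda>t. ecdf (F i) (ginv G t))"
    using marg_ordstat[OF assms] by auto
  then show ?thesis
    using Xcop unfolding copula_of_def
    by (auto simp: copula_C_eq_vcdf_G_X vcdf_ordstat[OF assms, symmetric] vcdf_def)
qed

end

theorem mainTheorem9:
  fixes d :: nat and F :: "nat \<Rightarrow> real \<Rightarrow> real"
    and C S :: "(nat \<Rightarrow> real) \<Rightarrow> real"
    and M :: "'a measure" and X :: "'a \<Rightarrow> nat \<Rightarrow> real" and Perm :: "'a \<Rightarrow> nat \<Rightarrow> nat"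
  assumes F: "in_Fd d F"
    and C: "in_COS d F C"
    and M: "prob_space M"
    and X: "rand_vec M d X"
    and Xmarg: "\<forall>i<d. marg M X i = F i"
    and Xcop: "copula_of M d X C"
    and Perm_perm: "\<forall>\<omega>\<in>space M. Perm \<omega> permutes {..<d}"
    and Perm_meas: "Perm \<in> measurable M (count_space UNIV)"
    and Perm_unif: "\<forall>p. p permutes {..<d} \<longrightarrow>
                    measure M {\<omega> \<in> space M. Perm \<omega> = p} = 1 / fact d"
    and indep: "\<forall>A \<in> sets (PiM {..<d} (\<lambda>_. borel)). \<forall>p.
                  measure M {\<omega> \<in> space M. restrict (X \<omega>) {..<d} \<in> A \<and> Perm \<omega> = p}
                  = measure M {\<omega> \<in> space M. restrict (X \<omega>) {..<d} \<in> A}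
                    * measure M {\<omega> \<in> space M. Perm \<omega> = p}"
    and S: "copula_of M d (\<lambda>\<omega> i. X \<omega> (Perm \<omega> i)) S"
  shows "\<forall>(N :: 'b measure) U. prob_space N \<and> rand_vec N d U \<and> has_cdf N d U S \<longrightarrow>
           (\<forall>i<d.
              (\<forall>t. marg N (\<lambda>\<omega>. ordstat d (U \<omega>)) i t = ecdf (F i) (ginv (Gmix d F) t))
            \<and> (\<forall>t\<in>{0<..<1}. ginv (marg N (\<lambda>\<omega>. ordstat d (U \<omega>)) i) t
                               = ereal (ecdf (Gmix d F) (ginv (F i) t))))
         \<and> copula_of N d (\<lambda>\<omega>. ordstat d (U \<omega>)) C
         \<and> (\<forall>C'. copula_of N d (\<lambda>\<omega>. ordstat d (U \<omega>)) C' \<longrightarrow> C' = C)"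
proof -
  interpret random_symmetrization M d F C S X Perm
    using assms by (simp add: random_symmetrization_def random_symmetrization_axioms_def)
  show ?thesis
    using marg_ordstat ginv_marg_ordstat copula_of_ordstat copula_of_unique[OF copula_of_ordstat, symmetric]
    by auto
qed

end
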